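(* Let $\mu>-\tfrac12$ and $\xi,\alpha\in\mathbb{R}$. Then, for all real $t$, $$\text{(i)}\quad \sum_{n=0}^{\infty}\frac{h_{n+1}^{\mu}(\xi,\alpha)}{\gamma_{\mu}(n)}t^{n}=(\xi+2\alpha t)\,e^{\alpha t^{2}}e_{\mu}(\xi t),$$ $$\text{(ii)}\quad \sum_{n=0}^{\infty}\frac{h_{n+2}^{\mu}(\xi,\alpha)}{\gamma_{\mu}(n)}t^{n}=(\xi^{2}+4\xi\alpha t+4\alpha^{2}t^{2}+2\alpha)\,e^{\alpha t^{2}}e_{\mu}(\xi t)+4\alpha\mu\, e^{\alpha t^{2}}e_{\mu}(-\xi t).$$
   Context: For $\mu>-\tfrac12$ define $\gamma_\mu(2k)=\dfrac{2^{2k}k!\,\Gamma(k+\mu+1/2)}{\Gamma(\mu+1/2)}$ and $\gamma_\mu(2k+1)=\dfrac{2^{2k+1}k!\,\Gamma(k+\mu+3/2)}{\Gamma(\mu+1/2)}$ for $k\in\{0,1,2,\dots\}$. The Dunkl analogue of the exponential is $e_\mu(x)=\sum_{k=0}^\infty \dfrac{x^k}{\gamma_\mu(k)}$. The polynomials $h_n^\mu(\xi,\alpha)$ are defined by $$h_n^\mu(\xi,\alpha)=\gamma_\mu(n)\sum_{k=0}^{\lfloor n/2\rfloor}\frac{\alpha^k\xi^{n-2k}}{k!\,\gamma_\mu(n-2k)},$$ equivalently by the generating function $\sum_{n=0}^\infty \dfrac{h_n^\mu(\xi,\alpha)}{\gamma_\mu(n)}t^n=e^{\alpha t^2}e_\mu(\xi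 t)$. *)

theory Defs
  imports "HOL-Analysis.Analysis"
begin

definition dunkl_gamma :: "real \<Rightarrow> nat \<Rightarrow> real" where
  "dunkl_gamma \<mu> n =
     (if even n then
        2 ^ n * fact (n div 2) * Gamma (real (n div 2) + \<mu> + 1/2) / Gamma (\<mu> + 1/2)
      else
        2 ^ n * fact (n div 2) * Gamma (real (n div 2) + \<mu> + 3/2) / Gamma (\<mu> + 1/2))"

definition dunkl_exp :: "real \<Rightarrow> real \<Rightarrow> real" where
  "dunkl_exp \<mu> x = (\<Sum>k. x ^ k / dunkl_gamma \<mu> k)"

definition dunkl_heat_poly :: "real \<Rightarrow> nat \<Rightarrow> real \<Rightarrow> real \<Rightarrow> real" where
  "dunkl_heat_poly \<mu> n \<xi> \<alpha> =
     dunkl_gamma \<mu> n *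
       (\<Sum>k\<le>n div 2. \<alpha> ^ k * \<xi> ^ (n - 2 * k) / (fact k * dunkl_gamma \<mu> (n - 2 * k)))"

end

theory Submission
  imports Defs
begin

text \<open>
  The coefficients S(n) = h_n(\<xi>,\<alpha>) / \<gamma>(n) of the generating function
  exp(\<alpha> t^2) e(\<xi> t) form the Cauchy product of two absolutely convergent series.
  Since \<gamma>(n) = \<theta>(n) \<gamma>(n - 1) with \<theta>(n) = n + 2\<mu> for odd n and \<theta>(n) = n for even n,
  they satisfy the three-term recurrence \<theta>(n) S(n) = \<xi> S(n - 1) + 2\<alpha> S(n - 2): split
  \<theta>(n) = \<theta>(n - 2k) + 2k in the k-th summand, let \<theta>(n - 2k) lower the Dunkl factorial and
  2k lower the factorial k!.  Hence h_{n+1} / \<gamma>(n) = \<theta>(n + 1) S(n + 1)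
  combines the coefficients of the generating function and of t times it, giving (i).
  Applying the recurrence twice gives (ii): there \<theta>(n + 1) - \<theta>(n) = 1 + 2\<mu>(-1)^n, and the
  sign (-1)^n turns the generating function at t into the one at -t, i.e. e(\<xi> t) into e(-\<xi> t).
\<close>

definition dunkl_theta :: "real \<Rightarrow> nat \<Rightarrow> real" where
  "dunkl_theta \<mu> m = real m + (if odd m then 2 * \<mu> else 0)"

lemma dunkl_theta_0 [simp]: "dunkl_theta \<mu> 0 = 0"
  by (simp add: dunkl_theta_def)

lemma dunkl_theta_pos: "\<mu> > - 1/2 \<Longrightarrow> m > 0 \<Longrightarrow> dunkl_theta \<mu> m > 0"
  by (auto simp: dunkl_theta_def)

lemma dunkl_theta_ge: "\<mu> > - 1/2 \<Longrightarrow> dunkl_theta \<mu> (Suc m) \<ge> real m"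
  by (auto simp: dunkl_theta_def)

lemma dunkl_theta_add_even: "dunkl_theta \<mu> (2 * k + j) = dunkl_theta \<mu> j + 2 * real k"
  by (simp add: dunkl_theta_def)

lemma dunkl_theta_Suc: "dunkl_theta \<mu> (Suc n) = dunkl_theta \<mu> n + 1 + 2 * \<mu> * (-1) ^ n"
  by (auto simp: dunkl_theta_def)

lemma dunkl_gamma_pos: "\<mu> > - 1/2 \<Longrightarrow> dunkl_gamma \<mu> n > 0"
  by (simp add: dunkl_gamma_def)

lemma dunkl_gamma_Suc:
  assumes "\<mu> > - 1/2"
  shows "dunkl_gamma \<mu> (Suc n) = dunkl_theta \<mu> (Suc n) * dunkl_gamma \<mu> n"
proof (cases "even n")
  case True
  then obtain k where n: "n = 2 * k" by auto
  have "Gamma (real k + \<mu> + 1/2 + 1) = (real k + \<mu> + 1/2) * Gamma (real k + \<mu> + 1/2)"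
    using assms by (intro Gamma_plus1) (auto elim!: nonpos_Ints_cases)
  then have Gamma_step: "Gamma (real k + \<mu> + 3/2) = (real k + \<mu> + 1/2) * Gamma (real k + \<mu> + 1/2)"
    by (simp add: add.assoc)
  show ?thesis unfolding dunkl_gamma_def dunkl_theta_def n by (simp add: Gamma_step)
next
  case False
  then obtain k where n: "n = 2 * k + 1" using oddE by blast
  then have div2: "Suc n div 2 = Suc k" "n div 2 = k" by auto
  have Gamma_eq: "Gamma (real (Suc k) + \<mu> + 1/2) = Gamma (real k + \<mu> + 3/2)"
    by (simp add: algebra_simps)
  have "even (Suc n)" "odd n" "real (Suc n) = 2 * (1 + real k)" using n by auto
  then show ?thesis unfolding dunkl_gamma_def dunkl_theta_def div2
    by (simp add: Gamma_eq power_Suc ac_simps)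
qed

lemma dunkl_theta_mult_exp_term:
  assumes "\<mu> > - 1/2"
  shows "dunkl_theta \<mu> (Suc m) * (x ^ Suc m / dunkl_gamma \<mu> (Suc m)) = x * (x ^ m / dunkl_gamma \<mu> m)"
proof -
  have "dunkl_theta \<mu> (Suc m) \<noteq> 0" using dunkl_theta_pos[OF assms, of "Suc m"] by simp
  then show ?thesis by (simp add: dunkl_gamma_Suc[OF assms])
qed

lemma summable_norm_dunkl_exp:
  assumes "\<mu> > - 1/2"
  shows "summable (\<lambda>k. norm (x ^ k / dunkl_gamma \<mu> k))"
proof (rule summable_ratio_test[of "1/2" "nat \<lceil>2 * \<bar>x\<bar>\<rceil>"])
  fix n assume "nat \<lceil>2 * \<bar>x\<bar>\<rceil> \<le> n"
  then have "2 * \<bar>x\<bar> \<le> dunkl_theta \<mu> (Suc n)"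
    using dunkl_theta_ge[OF assms, of n] by linarith
  moreover have \<theta>_pos: "dunkl_theta \<mu> (Suc n) > 0" using dunkl_theta_pos[OF assms] by simp
  ultimately have ratio: "\<bar>x\<bar> / dunkl_theta \<mu> (Suc n) \<le> 1/2" by (simp add: divide_simps)
  have "x ^ Suc n / dunkl_gamma \<mu> (Suc n) = x / dunkl_theta \<mu> (Suc n) * (x ^ n / dunkl_gamma \<mu> n)"
    by (simp add: dunkl_gamma_Suc[OF assms])
  then have "norm (x ^ Suc n / dunkl_gamma \<mu> (Suc n))
      = \<bar>x\<bar> / dunkl_theta \<mu> (Suc n) * norm (x ^ n / dunkl_gamma \<mu> n)"
    using \<theta>_pos dunkl_gamma_pos[OF assms, of n] dunkl_gamma_pos[OF assms, of "Suc n"]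
    by (simp add: abs_mult)
  also have "\<dots> \<le> 1/2 * norm (x ^ n / dunkl_gamma \<mu> n)"
    using ratio by (rule mult_right_mono) simp
  finally show "norm (norm (x ^ Suc n / dunkl_gamma \<mu> (Suc n))) \<le> 1/2 * norm (norm (x ^ n / dunkl_gamma \<mu> n))"
    by simp
qed simp

lemma dunkl_exp_sums:
  assumes "\<mu> > - 1/2"
  shows "(\<lambda>k. x ^ k / dunkl_gamma \<mu> k) sums dunkl_exp \<mu> x"
  unfolding dunkl_exp_def
  using summable_norm_cancel[OF summable_norm_dunkl_exp[OF assms]] by (rule summable_sums)

lemma sums_even_spread:
  fixes f :: "nat \<Rightarrow> 'a::real_normed_vector"
  assumes "f sums s"
  shows "(\<lambda>i. if even i then f (i div 2) else 0) sums s"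
proof -
  define g where "g = (\<lambda>i. if even i then f (i div 2) else 0)"
  have "strict_mono (\<lambda>k::nat. 2 * k)" by (auto simp: strict_mono_def)
  moreover have "g n = 0" if "n \<notin> range (\<lambda>k. 2 * k)" for n
    using that by (auto simp: g_def)
  moreover have "(\<lambda>k. g (2 * k)) sums s" using assms by (simp add: g_def)
  ultimately have "g sums s" by (simp add: sums_mono_reindex)
  then show ?thesis unfolding g_def .
qed

definition gauss_term :: "real \<Rightarrow> real \<Rightarrow> nat \<Rightarrow> real" where
  "gauss_term \<alpha> t i = (if even i then \<alpha> ^ (i div 2) / fact (i div 2) * t ^ i else 0)"

lemma gauss_term_sums: "gauss_term \<alpha> t sums exp (\<alpha> * t\<^sup>2)"
proof -
  have "(\<lambda>k. (\<alpha> * t\<^sup>2) ^ k / fact k) sums exp (\<alpha> * t\<^sup>2)"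
    using exp_converges[of "\<alpha> * t\<^sup>2"] by (simp add: divide_simps)
  moreover have "(\<lambda>i. if even i then (\<alpha> * t\<^sup>2) ^ (i div 2) / fact (i div 2) else 0) = gauss_term \<alpha> t"
    by (auto simp: gauss_term_def power_mult_distrib power_mult[symmetric] elim!: evenE)
  ultimately show ?thesis using sums_even_spread by fastforce
qed

lemma norm_gauss_term: "norm (gauss_term \<alpha> t i) = gauss_term \<bar>\<alpha>\<bar> t i"
  by (auto simp: gauss_term_def abs_mult power_abs power_even_abs)

text \<open>The guard avoids the truncated subtraction n - 2k and lets S(n) be summed over any
  range of k containing {..n div 2}.\<close>

definition heat_term :: "real \<Rightarrow> real \<Rightarrow> real \<Rightarrow> nat \<Rightarrow> nat \<Rightarrow> real" where
  "heat_term \<mu> \<xi> \<alpha> n k =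
     (if 2 * k \<le> n then \<alpha> ^ k / fact k * (\<xi> ^ (n - 2 * k) / dunkl_gamma \<mu> (n - 2 * k)) else 0)"

definition heat_coeff :: "real \<Rightarrow> real \<Rightarrow> real \<Rightarrow> nat \<Rightarrow> real" where
  "heat_coeff \<mu> \<xi> \<alpha> n = (\<Sum>k\<le>n div 2. heat_term \<mu> \<xi> \<alpha> n k)"

lemma heat_coeff_eq_sum:
  assumes "n div 2 \<le> N"
  shows "heat_coeff \<mu> \<xi> \<alpha> n = (\<Sum>k\<le>N. heat_term \<mu> \<xi> \<alpha> n k)"
  unfolding heat_coeff_def
  by (rule sum.mono_neutral_left) (use assms in \<open>auto simp: heat_term_def\<close>)

lemma dunkl_heat_poly_eq_heat_coeff:
  "dunkl_heat_poly \<mu> n \<xi> \<alpha> = dunkl_gamma \<mu> n * heat_coeff \<mu> \<xi> \<alpha> n"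
proof -
  have "heat_coeff \<mu> \<xi> \<alpha> n
      = (\<Sum>k\<le>n div 2. \<alpha> ^ k * \<xi> ^ (n - 2 * k) / (fact k * dunkl_gamma \<mu> (n - 2 * k)))"
    unfolding heat_coeff_def by (rule sum.cong) (auto simp: heat_term_def)
  then show ?thesis by (simp add: dunkl_heat_poly_def)
qed

lemma heat_term_Suc_0:
  assumes "\<mu> > - 1/2"
  shows "dunkl_theta \<mu> (Suc n) * heat_term \<mu> \<xi> \<alpha> (Suc n) 0 = \<xi> * heat_term \<mu> \<xi> \<alpha> n 0"
  using dunkl_theta_mult_exp_term[OF assms, of n \<xi>] by (simp add: heat_term_def)

lemma heat_term_Suc_Suc:
  assumes "\<mu> > - 1/2"
  shows "dunkl_theta \<mu> (Suc (Suc n)) * heat_term \<mu> \<xi> \<alpha> (Suc (Suc n)) (Suc k)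
    = \<xi> * heat_term \<mu> \<xi> \<alpha> (Suc n) (Suc k) + 2 * \<alpha> * heat_term \<mu> \<xi> \<alpha> n k"
proof (cases "2 * k \<le> n")
  case True
  then obtain j where n: "n = 2 * k + j" using le_Suc_ex by blast
  define a where "a i = \<alpha> ^ i / fact i" for i
  define b where "b m = \<xi> ^ m / dunkl_gamma \<mu> m" for m
  have a_Suc: "real (Suc k) * a (Suc k) = \<alpha> * a k"
    by (simp add: a_def field_simps del: of_nat_Suc)
  have theta: "dunkl_theta \<mu> (Suc (Suc n)) = dunkl_theta \<mu> j + 2 * real (Suc k)"
    using dunkl_theta_add_even[of \<mu> "Suc k" j] by (simp add: n)
  have lower: "a (Suc k) * (dunkl_theta \<mu> j * b j) = \<xi> * heat_term \<mu> \<xi> \<alpha> (Suc n) (Suc k)"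
  proof (cases j)
    case (Suc i)
    then show ?thesis
      using dunkl_theta_mult_exp_term[OF assms, of i \<xi>]
      by (simp add: heat_term_def a_def b_def n)
  qed (simp add: heat_term_def n)
  have "dunkl_theta \<mu> (Suc (Suc n)) * (a (Suc k) * b j)
      = a (Suc k) * (dunkl_theta \<mu> j * b j) + 2 * (real (Suc k) * a (Suc k)) * b j"
    unfolding theta by (simp add: algebra_simps)
  also have "\<dots> = \<xi> * heat_term \<mu> \<xi> \<alpha> (Suc n) (Suc k) + 2 * \<alpha> * (a k * b j)"
    unfolding lower a_Suc by simp
  finally show ?thesis by (simp add: heat_term_def a_def b_def n)
qed (auto simp: heat_term_def)

fun shift_seq :: "(nat \<Rightarrow> 'a::zero) \<Rightarrow> nat \<Rightarrow> 'a" where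
  "shift_seq c 0 = 0"
| "shift_seq c (Suc n) = c n"

lemma sums_shift_seq:
  fixes c :: "nat \<Rightarrow> 'a::real_normed_field"
  assumes "(\<lambda>n. c n * t ^ n) sums s"
  shows "(\<lambda>n. shift_seq c n * t ^ n) sums (t * s)"
proof -
  let ?f = "\<lambda>n. shift_seq c n * t ^ n"
  have "(\<lambda>n. ?f (Suc n)) = (\<lambda>n. t * (c n * t ^ n))" by (simp add: algebra_simps)
  then have "(\<lambda>n. ?f (Suc n)) sums (t * s)" using sums_mult[OF assms, of t] by simp
  then show ?thesis using sums_Suc_iff[of ?f "t * s"] by simp
qed

lemma heat_coeff_Suc_Suc_recurrence:
  assumes "\<mu> > - 1/2"
  shows "dunkl_theta \<mu> (Suc (Suc m)) * heat_coeff \<mu> \<xi> \<alpha> (Suc (Suc m))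
    = \<xi> * heat_coeff \<mu> \<xi> \<alpha> (Suc m) + 2 * \<alpha> * heat_coeff \<mu> \<xi> \<alpha> m"
proof -
  let ?t = "heat_term \<mu> \<xi> \<alpha>" and ?\<theta> = "dunkl_theta \<mu> (Suc (Suc m))"
  have "?\<theta> * heat_coeff \<mu> \<xi> \<alpha> (Suc (Suc m))
      = ?\<theta> * ?t (Suc (Suc m)) 0 + (\<Sum>k\<le>Suc m. ?\<theta> * ?t (Suc (Suc m)) (Suc k))"
    by (simp only: heat_coeff_eq_sum[OF div_le_dividend] sum.atMost_Suc_shift
        distrib_left sum_distrib_left)
  also have "\<dots> = \<xi> * (?t (Suc m) 0 + (\<Sum>k\<le>Suc m. ?t (Suc m) (Suc k)))
      + 2 * \<alpha> * (\<Sum>k\<le>Suc m. ?t m k)"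
    by (simp add: heat_term_Suc_0[OF assms] heat_term_Suc_Suc[OF assms] sum.distrib
        sum_distrib_left algebra_simps)
  also have "\<dots> = \<xi> * heat_coeff \<mu> \<xi> \<alpha> (Suc m) + 2 * \<alpha> * heat_coeff \<mu> \<xi> \<alpha> m"
    using heat_coeff_eq_sum[of "Suc m" "Suc (Suc m)"] heat_coeff_eq_sum[of m "Suc m"]
    by (simp only: sum.atMost_Suc_shift)
  finally show ?thesis .
qed

lemma heat_coeff_recurrence:
  assumes "\<mu> > - 1/2"
  shows "dunkl_theta \<mu> n * heat_coeff \<mu> \<xi> \<alpha> n
    = \<xi> * shift_seq (heat_coeff \<mu> \<xi> \<alpha>) n + 2 * \<alpha> * shift_seq (shift_seq (heat_coeff \<mu> \<xi> \<alpha>)) n"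
proof (cases n)
  case (Suc m)
  then show ?thesis
    using heat_term_Suc_0[OF assms, of 0 \<xi> \<alpha>] heat_coeff_Suc_Suc_recurrence[OF assms]
    by (cases m) (simp_all add: heat_coeff_def heat_term_def)
qed simp

lemma heat_coeff_series_sums:
  assumes "\<mu> > - 1/2"
  shows "(\<lambda>n. heat_coeff \<mu> \<xi> \<alpha> n * t ^ n) sums (exp (\<alpha> * t\<^sup>2) * dunkl_exp \<mu> (\<xi> * t))"
proof -
  define B where "B j = (\<xi> * t) ^ j / dunkl_gamma \<mu> j" for j
  have "summable (\<lambda>i. norm (gauss_term \<alpha> t i))"
    unfolding norm_gauss_term using gauss_term_sums sums_summable by blast
  moreover have "summable (\<lambda>j. norm (B j))"
    unfolding B_def by (rule summable_norm_dunkl_exp[OF assms])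
  ultimately have "(\<lambda>k. \<Sum>i\<le>k. gauss_term \<alpha> t i * B (k - i))
      sums (suminf (gauss_term \<alpha> t) * suminf B)"
    by (rule Cauchy_product_sums)
  moreover have "suminf (gauss_term \<alpha> t) = exp (\<alpha> * t\<^sup>2)"
    using gauss_term_sums sums_unique by metis
  moreover have "suminf B = dunkl_exp \<mu> (\<xi> * t)"
    unfolding B_def using dunkl_exp_sums[OF assms] sums_unique by metis
  moreover have "(\<Sum>i\<le>k. gauss_term \<alpha> t i * B (k - i)) = heat_coeff \<mu> \<xi> \<alpha> k * t ^ k" for k
  proof -
    have "(\<Sum>i\<le>k. gauss_term \<alpha> t i * B (k - i))
        = (\<Sum>i\<in>(\<lambda>j. 2 * j) ` {..k div 2}. gauss_term \<alpha> t i * B (k - i))"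
      by (rule sum.mono_neutral_right) (auto simp: gauss_term_def B_def elim!: evenE)
    also have "\<dots> = (\<Sum>j\<le>k div 2. heat_term \<mu> \<xi> \<alpha> k j * t ^ k)"
      by (subst sum.reindex) (auto simp: inj_on_def gauss_term_def B_def heat_term_def
          power_mult_distrib power_add[symmetric] intro!: sum.cong)
    finally show ?thesis by (simp add: heat_coeff_def sum_distrib_right)
  qed
  ultimately show ?thesis by simp
qed

lemma dunkl_heat_poly_shift1_div_gamma:
  assumes "\<mu> > - 1/2"
  shows "dunkl_heat_poly \<mu> (n + 1) \<xi> \<alpha> / dunkl_gamma \<mu> n
    = \<xi> * heat_coeff \<mu> \<xi> \<alpha> n + 2 * \<alpha> * shift_seq (heat_coeff \<mu> \<xi> \<alpha>) n"
  using heat_coeff_recurrence[OF assms, of "Suc n" \<xi> \<alpha>] dunkl_gamma_pos[OF assms, of n]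
  by (simp add: dunkl_heat_poly_eq_heat_coeff dunkl_gamma_Suc[OF assms])

lemma dunkl_heat_poly_shift2_div_gamma:
  assumes "\<mu> > - 1/2"
  shows "dunkl_heat_poly \<mu> (n + 2) \<xi> \<alpha> / dunkl_gamma \<mu> n
    = (\<xi>\<^sup>2 + 2 * \<alpha>) * heat_coeff \<mu> \<xi> \<alpha> n + 4 * \<xi> * \<alpha> * shift_seq (heat_coeff \<mu> \<xi> \<alpha>) n
      + 4 * \<alpha>\<^sup>2 * shift_seq (shift_seq (heat_coeff \<mu> \<xi> \<alpha>)) n
      + 4 * \<alpha> * \<mu> * ((-1) ^ n * heat_coeff \<mu> \<xi> \<alpha> n)"
proof -
  let ?S = "heat_coeff \<mu> \<xi> \<alpha>" and ?\<theta> = "dunkl_theta \<mu>"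
  have "dunkl_heat_poly \<mu> (n + 2) \<xi> \<alpha> / dunkl_gamma \<mu> n
      = ?\<theta> (Suc n) * (?\<theta> (Suc (Suc n)) * ?S (Suc (Suc n)))"
    using dunkl_gamma_pos[OF assms, of n]
    by (simp add: dunkl_heat_poly_eq_heat_coeff dunkl_gamma_Suc[OF assms])
  also have "\<dots> = \<xi> * (?\<theta> (Suc n) * ?S (Suc n)) + 2 * \<alpha> * (?\<theta> n * ?S n)
      + 2 * \<alpha> * (1 + 2 * \<mu> * (-1) ^ n) * ?S n"
    using heat_coeff_recurrence[OF assms, of "Suc (Suc n)" \<xi> \<alpha>]
    by (simp add: dunkl_theta_Suc algebra_simps)
  finally show ?thesis
    using heat_coeff_recurrence[OF assms, of "Suc n" \<xi> \<alpha>] heat_coeff_recurrence[OF assms, of n \<xi> \<alpha>]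
    by (simp add: power2_eq_square algebra_simps)
qed

lemma dunkl_heat_poly_shift1_series_sums:
  assumes "\<mu> > - 1/2"
  shows "(\<lambda>n. dunkl_heat_poly \<mu> (n + 1) \<xi> \<alpha> / dunkl_gamma \<mu> n * t ^ n) sums
    ((\<xi> + 2 * \<alpha> * t) * exp (\<alpha> * t\<^sup>2) * dunkl_exp \<mu> (\<xi> * t))"
proof -
  let ?S = "heat_coeff \<mu> \<xi> \<alpha>" and ?F = "exp (\<alpha> * t\<^sup>2) * dunkl_exp \<mu> (\<xi> * t)"
  have S: "(\<lambda>n. ?S n * t ^ n) sums ?F" by (rule heat_coeff_series_sums[OF assms])
  have coeffs: "(\<lambda>n. dunkl_heat_poly \<mu> (n + 1) \<xi> \<alpha> / dunkl_gamma \<mu> n * t ^ n)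
      = (\<lambda>n. \<xi> * (?S n * t ^ n) + 2 * \<alpha> * (shift_seq ?S n * t ^ n))"
    unfolding dunkl_heat_poly_shift1_div_gamma[OF assms] by (simp add: algebra_simps)
  have limit: "(\<xi> + 2 * \<alpha> * t) * ?F = \<xi> * ?F + 2 * \<alpha> * (t * ?F)"
    by (simp add: algebra_simps)
  show ?thesis
    unfolding coeffs mult.assoc[of "\<xi> + 2 * \<alpha> * t"] limit
    by (intro sums_add sums_mult S sums_shift_seq)
qed

lemma dunkl_heat_poly_shift2_series_sums:
  assumes "\<mu> > - 1/2"
  shows "(\<lambda>n. dunkl_heat_poly \<mu> (n + 2) \<xi> \<alpha> / dunkl_gamma \<mu> n * t ^ n) sums
    ((\<xi>\<^sup>2 + 4 * \<xi> * \<alpha> * t + 4 * \<alpha>\<^sup>2 * t\<^sup>2 + 2 * \<alpha>) * exp (\<alpha> * t\<^sup>2) * dunkl_exp \<mu> (\<xi> * t)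
      + 4 * \<alpha> * \<mu> * exp (\<alpha> * t\<^sup>2) * dunkl_exp \<mu> (- \<xi> * t))"
proof -
  let ?S = "heat_coeff \<mu> \<xi> \<alpha>" and ?F = "exp (\<alpha> * t\<^sup>2) * dunkl_exp \<mu> (\<xi> * t)"
    and ?G = "exp (\<alpha> * t\<^sup>2) * dunkl_exp \<mu> (- \<xi> * t)"
  have S: "(\<lambda>n. ?S n * t ^ n) sums ?F" by (rule heat_coeff_series_sums[OF assms])
  have "(\<lambda>n. ?S n * (- t) ^ n) = (\<lambda>n. (-1) ^ n * ?S n * t ^ n)"
    by (simp add: power_minus[of t] mult_ac)
  then have S_neg: "(\<lambda>n. (-1) ^ n * ?S n * t ^ n) sums ?G"
    using heat_coeff_series_sums[OF assms, of \<xi> \<alpha> "- t"] by simp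
  have coeffs: "(\<lambda>n. dunkl_heat_poly \<mu> (n + 2) \<xi> \<alpha> / dunkl_gamma \<mu> n * t ^ n)
      = (\<lambda>n. (\<xi>\<^sup>2 + 2 * \<alpha>) * (?S n * t ^ n) + 4 * \<xi> * \<alpha> * (shift_seq ?S n * t ^ n)
        + 4 * \<alpha>\<^sup>2 * (shift_seq (shift_seq ?S) n * t ^ n) + 4 * \<alpha> * \<mu> * ((-1) ^ n * ?S n * t ^ n))"
    unfolding dunkl_heat_poly_shift2_div_gamma[OF assms] by (simp add: algebra_simps)
  have limit: "(\<xi>\<^sup>2 + 4 * \<xi> * \<alpha> * t + 4 * \<alpha>\<^sup>2 * t\<^sup>2 + 2 * \<alpha>) * exp (\<alpha> * t\<^sup>2) * dunkl_exp \<mu> (\<xi> * t)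
      + 4 * \<alpha> * \<mu> * exp (\<alpha> * t\<^sup>2) * dunkl_exp \<mu> (- \<xi> * t)
    = (\<xi>\<^sup>2 + 2 * \<alpha>) * ?F + 4 * \<xi> * \<alpha> * (t * ?F) + 4 * \<alpha>\<^sup>2 * (t * (t * ?F)) + 4 * \<alpha> * \<mu> * ?G"
    by (simp add: power2_eq_square algebra_simps)
  show ?thesis
    unfolding coeffs limit by (intro sums_add sums_mult S S_neg sums_shift_seq)
qed

theorem lemma2:
  fixes \<mu> \<xi> \<alpha> :: real
  assumes "\<mu> > - 1/2"
  shows "\<forall>t::real.
     (\<lambda>n. dunkl_heat_poly \<mu> (n + 1) \<xi> \<alpha> / dunkl_gamma \<mu> n * t ^ n) sums
        ((\<xi> + 2 * \<alpha> * t) * exp (\<alpha> * t\<^sup>2) * dunkl_exp \<mu> (\<xi> * t))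
   \<and> (\<lambda>n. dunkl_heat_poly \<mu> (n + 2) \<xi> \<alpha> / dunkl_gamma \<mu> n * t ^ n) sums
        ((\<xi>\<^sup>2 + 4 * \<xi> * \<alpha> * t + 4 * \<alpha>\<^sup>2 * t\<^sup>2 + 2 * \<alpha>) * exp (\<alpha> * t\<^sup>2) * dunkl_exp \<mu> (\<xi> * t)
         + 4 * \<alpha> * \<mu> * exp (\<alpha> * t\<^sup>2) * dunkl_exp \<mu> (- \<xi> * t))"
  using dunkl_heat_poly_shift1_series_sums[OF assms] dunkl_heat_poly_shift2_series_sums[OF assms]
  by blast

end
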